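(* Let $\lambda\in(0,1)$ with $\lambda\neq1-\frac1{2n}$ for all $n\in\mathbb{N}$. Let $\tau_0(x)=\lambda x$, $\tau_{1/4}(x)=\lambda(x+\frac14)$, let $X_L$ be their attractor, $W(x)=\cos^2(2\pi x/\lambda)$, and let $\nu_\lambda$, $\mathcal{W}_0$, $W^\omega$, $\tau_\omega$ be as in the context. Then the restriction of $|\hat\nu_\lambda|^2$ to $X_L$ is the unique continuous function $f$ on $X_L$ satisfying $$\sum_{\omega\in\mathcal{W}_0}W^\omega(x)f(\tau_\omega x)=1\quad\text{for all }x\in X_L,$$ where the series is understood as the limit as $n\to\infty$ of the partial sums over words $\omega\in\mathcal{W}_0$ of length at most $n$.
   Context: $X_L$ is the unique nonempty compact set with $X_L=\tau_0(X_L)\cup\tau_{1/4}(X_L)$. $\nu_\lambda$ is the unique Borel probability measure on $\mathbb{R}$ with $\nu_\lambda=\frac12(\nu_\lambda\circ\tau_+^{-1}+\nu_\lambda\circ\tau_-^{-1})$, $\tau_\pm(x)=\lambda x\pm1$, and $\hat\nu_\lambda(t)=\int e^{2\pi ixt}d\nu_\lambda(x)$. $\mathcal{W}_0=\{\emptyset\}\cup\{\omega_1\dots\omega_n: n\ge1,\ \omega_i\in\{0,\frac14\},\ \omega_n=\frac14\}$. For a finite word $\omega=\omega_1\dots\omega_n$: $\tau_\omega x=\tau_{\omega_n}\cdots\tau_{\omega_1}x$, $W^\omega(x)=W(\tau_{\omega_1}x)W(\tau_{\omega_2}\tau_{\omega_1}x)\cdots W(\tau_{\omega_n}\cdots\tau_{\omega_1}x)$;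 $\tau_\emptyset x=x$, $W^\emptyset=1$. *)

theory Defs
  imports "HOL-Probability.Probability"
begin

definition tauL :: "real \<Rightarrow> real \<Rightarrow> real \<Rightarrow> real" where
  "tauL lam d x = lam * (x + d)"

definition XL :: "real \<Rightarrow> real set" where
  "XL lam = (THE X. compact X \<and> X \<noteq> {} \<and>
              X = tauL lam 0 ` X \<union> tauL lam (1/4) ` X)"

definition nu :: "real \<Rightarrow> real measure" where
  "nu lam = (THE M. prob_space M \<and> sets M = sets borel \<and>
     (\<forall>A\<in>sets borel.
        emeasure M A = (emeasure M ((\<lambda>x. lam * x + 1) -` A)
                       + emeasure M ((\<lambda>x. lam * x - 1) -` A)) / 2))"

definition nu_hat :: "real \<Rightarrow> real \<Rightarrow> complex" where
  "nu_hat lam t = (LINT x|nu lam. cis (2 * pi * x * t))"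

definition Wf :: "real \<Rightarrow> real \<Rightarrow> real" where
  "Wf lam x = (cos (2 * pi * x / lam))^2"

text \<open>Words omega_1 ... omega_n as lists; tau_omega x = tau_{omega_n} ( ... tau_{omega_1} x).\<close>
definition tau_word :: "real \<Rightarrow> real list \<Rightarrow> real \<Rightarrow> real" where
  "tau_word lam w x = fold (tauL lam) w x"

definition W_word :: "real \<Rightarrow> real list \<Rightarrow> real \<Rightarrow> real" where
  "W_word lam w x = (\<Prod>k\<in>{1..length w}. Wf lam (tau_word lam (take k w) x))"

definition W0 :: "real list set" where
  "W0 = {w. set w \<subseteq> {0, 1/4} \<and> (w = [] \<or> last w = 1/4)}"

definition partial_sum :: "real \<Rightarrow> (real \<Rightarrow> real) \<Rightarrow> nat \<Rightarrow> real \<Rightarrow> real" where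
  "partial_sum lam f n x =
     (\<Sum>w\<in>{w\<in>W0. length w \<le> n}. W_word lam w x * f (tau_word lam w x))"

end

(*
  Self-similarity of nu gives nu_hat t = cos (2 pi t) nu_hat (lam t) (this also makes nu unique,
  by Levy's theorem, while the law of the random series sum of +-lam^k shows it exists).  Hence
  g = |nu_hat|^2 satisfies g x = cos^2 (2 pi x) g (lam x), and splitting words by their first
  letter, the partial sums P n of the series for g satisfy
    P (n+1) x = cos^2 (2 pi x) P n (lam x) + sin^2 (2 pi x) P n (lam (x + 1/4)).
  They increase to a lower semicontinuous h <= 1 with h 0 = 1 satisfying the same averaging
  identity, so the set of minimum points of h on X_L is mapped into itself by every branch of
  positive weight.  If its least element y were positive, then cos (2 pi y) = 0, and following the
  branches through (y, y + 1/4) yields lam^a (y + 1/4) = y = lam^p (y + lam/4) with a >= 2 (a = 1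
  is excluded exactly by lam <> 1 - 1/(2n)), which has no solution.  So h attains its minimum
  at 0 and h = 1 on X_L.  Conversely a continuous solution f satisfies
  f x = cos^2 (2 pi x) f (lam x) and f 0 = 1, so |f - g| can only grow along
  x, lam x, lam^2 x, ... -> 0, where it vanishes.
*)

theory Submission
  imports Defs
begin

lemma vanishes_if_norm_le_norm_scaled:
  fixes e :: "real \<Rightarrow> 'a::real_normed_vector"
  assumes lam: "0 < lam" "lam < 1"
    and S: "x \<in> S" "\<And>y. y \<in> S \<Longrightarrow> lam * y \<in> S"
    and cont: "continuous (at 0 within S) e" and "e 0 = 0"
    and le: "\<And>y. y \<in> S \<Longrightarrow> norm (e y) \<le> norm (e (lam * y))"
  shows "e x = 0"
proof -
  have orbit: "lam ^ n * x \<in> S" for n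
    by (induction n) (use S in \<open>auto simp: mult.assoc\<close>)
  have "norm (e x) \<le> norm (e (lam ^ n * x))" for n
  proof (induction n)
    case (Suc n)
    then show ?case
      using le[OF orbit[of n]] by (simp add: mult.assoc)
  qed simp
  moreover have "(\<lambda>n. lam ^ n * x) \<longlonglongrightarrow> 0"
    using lam by (intro tendsto_mult_left_zero LIMSEQ_power_zero) auto
  then have "(\<lambda>n. e (lam ^ n * x)) \<longlonglongrightarrow> 0"
    using continuous_within_tendsto_compose'[OF cont, of "\<lambda>n. lam ^ n * x"] orbit \<open>e 0 = 0\<close> by simp
  then have "(\<lambda>n. norm (e (lam ^ n * x))) \<longlonglongrightarrow> 0"
    by (rule tendsto_norm_zero)
  ultimately have "norm (e x) \<le> 0"
    by (intro LIMSEQ_le_const) auto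
  then show ?thesis
    by simp
qed

lemma compact_attains_inf_closed_sublevel:
  fixes h :: "'a::topological_space \<Rightarrow> 'b::linorder"
  assumes "compact X" "X \<noteq> {}" "\<And>t. closed {x. h x \<le> t}"
  shows "\<exists>x\<in>X. \<forall>y\<in>X. h x \<le> h y"
proof -
  have "X \<inter> (\<Inter>y\<in>X. {x. h x \<le> h y}) \<noteq> {}"
  proof (rule compact_imp_fip_image[OF assms(1,3)])
    fix Y
    assume Y: "finite Y" "Y \<subseteq> X"
    show "X \<inter> (\<Inter>y\<in>Y. {x. h x \<le> h y}) \<noteq> {}"
    proof (cases "Y = {}")
      case False
      have "Min (h ` Y) \<in> h ` Y"
        using Y(1) False by (intro Min_in) auto
      then obtain y0 where "y0 \<in> Y" "h y0 = Min (h ` Y)"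
        by auto
      then have "y0 \<in> X \<inter> (\<Inter>y\<in>Y. {x. h x \<le> h y})"
        using Y by auto
      then show ?thesis
        by blast
    qed (use assms(2) in simp)
  qed
  then show ?thesis
    by blast
qed

lemma closed_sublevel_SUP:
  fixes P :: "nat \<Rightarrow> 'a::topological_space \<Rightarrow> real"
  assumes "\<And>n. continuous_on UNIV (P n)" "\<And>x. bdd_above (range (\<lambda>n. P n x))"
  shows "closed {x. (SUP n. P n x) \<le> t}"
proof -
  have "{x. (SUP n. P n x) \<le> t} = (\<Inter>n. {x. P n x \<le> t})"
    using assms(2) by (auto simp: cSUP_le_iff)
  then show ?thesis
    by (simp add: closed_INT closed_Collect_le assms(1))
qed

lemma convex_combination_le_lower_bound:
  fixes c s u v m :: real
  assumes "0 \<le> c" "0 \<le> s" "c + s = 1" "m \<le> u" "m \<le> v" "c * u + s * v \<le> m"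
  shows "c \<noteq> 0 \<Longrightarrow> u \<le> m" "s \<noteq> 0 \<Longrightarrow> v \<le> m"
proof -
  have "c * u + s * m \<le> m" "c * m + s * v \<le> m"
    using assms mult_left_mono[of m v s] mult_left_mono[of m u c] by linarith+
  moreover have "m = c * m + s * m"
    using assms(3) by (simp flip: distrib_right)
  ultimately have "c * u \<le> c * m" "s * v \<le> s * m"
    by linarith+
  then show "c \<noteq> 0 \<Longrightarrow> u \<le> m" "s \<noteq> 0 \<Longrightarrow> v \<le> m"
    using assms(1,2) by (simp_all add: mult_le_cancel_left)
qed

section \<open>The attractor\<close>

definition hutchinson :: "real \<Rightarrow> real set \<Rightarrow> real set" where
  "hutchinson lam X = tauL lam 0 ` X \<union> tauL lam (1/4) ` X"

lemma hutchinson_mono: "X \<subseteq> Y \<Longrightarrow> hutchinson lam X \<subseteq> hutchinson lam Y"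
  unfolding hutchinson_def by auto

lemma compact_hutchinson: "compact X \<Longrightarrow> compact (hutchinson lam X)"
  unfolding hutchinson_def tauL_def
  by (intro compact_Un compact_continuous_image continuous_intros)

lemma mem_hutchinson_iff:
  assumes "lam \<noteq> 0"
  shows "x \<in> hutchinson lam X \<longleftrightarrow> x / lam \<in> X \<or> x / lam - 1/4 \<in> X"
proof -
  have "x = tauL lam d y \<longleftrightarrow> y = x / lam - d" for d y
    using assms unfolding tauL_def by (auto simp: field_simps)
  then have "x \<in> tauL lam d ` X \<longleftrightarrow> x / lam - d \<in> X" for d
    by (auto simp: image_iff)
  then show ?thesis
    unfolding hutchinson_def by simp
qed

lemma hutchinson_interval_subset:
  assumes "0 < lam" "lam < 1"
  shows "hutchinson lam {0..lam / (4 * (1 - lam))} \<subseteq> {0..lam / (4 * (1 - lam))}"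
proof -
  have "tauL lam d y \<in> {0..lam / (4 * (1 - lam))}"
    if "y \<in> {0..lam / (4 * (1 - lam))}" "d \<in> {0, 1/4}" for y d
  proof -
    have "lam * (y + d) \<le> lam * (lam / (4 * (1 - lam)) + 1/4)"
      using that assms by (intro mult_left_mono) auto
    also have "\<dots> = lam / (4 * (1 - lam))"
      using assms by (simp add: field_simps)
    finally show ?thesis
      using that assms unfolding tauL_def by auto
  qed
  then show ?thesis
    unfolding hutchinson_def by blast
qed

definition attractor_approx :: "real \<Rightarrow> nat \<Rightarrow> real set" where
  "attractor_approx lam n = (hutchinson lam ^^ n) {0..lam / (4 * (1 - lam))}"

lemma attractor_approx_Suc: "attractor_approx lam (Suc n) = hutchinson lam (attractor_approx lam n)"
  unfolding attractor_approx_def by simp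

lemma compact_attractor_approx: "compact (attractor_approx lam n)"
  by (induction n) (auto simp: attractor_approx_def intro: compact_hutchinson)

lemma attractor_approx_nonempty:
  assumes "0 < lam" "lam < 1"
  shows "attractor_approx lam n \<noteq> {}"
  using assms by (induction n) (auto simp: attractor_approx_Suc hutchinson_def attractor_approx_def)

lemma attractor_approx_antimono:
  assumes "0 < lam" "lam < 1" "m \<le> n"
  shows "attractor_approx lam n \<subseteq> attractor_approx lam m"
proof -
  have "attractor_approx lam (Suc k) \<subseteq> attractor_approx lam k" for k
  proof (induction k)
    case 0
    then show ?case
      using hutchinson_interval_subset[OF assms(1,2)] by (simp add: attractor_approx_def)
  next
    case (Suc k)
    then show ?case
      unfolding attractor_approx_Suc[of lam "Suc k"] attractor_approx_Suc[of lam k]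
      by (rule hutchinson_mono)
  qed
  then show ?thesis
    using assms(3) by (rule decseq_SucI[unfolded decseq_def, rule_format])
qed

lemma hutchinson_fixpoint_exists:
  assumes "0 < lam" "lam < 1"
  shows "\<exists>X. compact X \<and> X \<noteq> {} \<and> X = hutchinson lam X \<and> X \<subseteq> {0..}"
proof (intro exI conjI)
  let ?K = "attractor_approx lam"
  note antimono = attractor_approx_antimono[OF assms]
  show "compact (\<Inter>n. ?K n)"
    by (auto intro: compact_Inter compact_attractor_approx)
  show "(\<Inter>n. ?K n) \<noteq> {}"
    using antimono
    by (intro compact_nest compact_attractor_approx attractor_approx_nonempty[OF assms])
  show "(\<Inter>n. ?K n) \<subseteq> {0..}"
    using INT_lower[of 0 UNIV ?K] by (auto simp: attractor_approx_def)
  have "hutchinson lam (\<Inter>n. ?K n) \<subseteq> ?K n" for n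
    using hutchinson_mono[of "\<Inter>n. ?K n" "?K n" lam] antimono[of n "Suc n"]
    by (auto simp: attractor_approx_Suc)
  moreover have "x \<in> hutchinson lam (\<Inter>n. ?K n)" if x: "x \<in> (\<Inter>n. ?K n)" for x
  proof -
    have "x \<in> hutchinson lam (?K n)" for n
      using x unfolding attractor_approx_Suc[symmetric] by blast
    then have "x / lam \<in> ?K n \<or> x / lam - 1/4 \<in> ?K n" for n
      using mem_hutchinson_iff[of lam] assms by simp
    \<comment> \<open>one of the two preimages lies in infinitely many, hence (by nesting) in all \<open>?K n\<close>\<close>
    then have "(\<forall>n. x / lam \<in> ?K n) \<or> (\<forall>n. x / lam - 1/4 \<in> ?K n)"
      using antimono by (meson in_mono max.cobounded1 max.cobounded2)
    then show ?thesis
      using mem_hutchinson_iff[of lam] assms by auto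
  qed
  ultimately show "(\<Inter>n. ?K n) = hutchinson lam (\<Inter>n. ?K n)"
    by blast
qed

lemma hutchinson_fixpoint_approx:
  assumes lam: "0 < lam"
    and X: "X \<subseteq> hutchinson lam X" and Y: "hutchinson lam Y \<subseteq> Y"
    and D: "\<And>x. x \<in> X \<Longrightarrow> \<exists>y\<in>Y. dist x y \<le> D" and "x \<in> X"
  shows "\<exists>y\<in>Y. dist x y \<le> lam ^ n * D"
  using \<open>x \<in> X\<close>
proof (induction n arbitrary: x)
  case (Suc n)
  then obtain x' d where x': "x' \<in> X" "d \<in> {0, 1/4}" "x = tauL lam d x'"
    using X unfolding hutchinson_def by blast
  obtain y' where y': "y' \<in> Y" "dist x' y' \<le> lam ^ n * D"
    using Suc.IH[OF x'(1)] by blast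
  have "tauL lam d y' \<in> Y"
    using Y x'(2) y'(1) unfolding hutchinson_def by blast
  moreover have "dist x (tauL lam d y') = lam * dist x' y'"
    using x'(3) lam by (simp add: tauL_def dist_real_def abs_mult flip: right_diff_distrib)
  moreover have "lam * dist x' y' \<le> lam ^ Suc n * D"
    using y'(2) lam by (simp add: mult_left_mono)
  ultimately show ?case
    by metis
qed (use D in simp)

lemma hutchinson_fixpoint_subset:
  assumes lam: "0 < lam" "lam < 1"
    and X: "compact X" "X = hutchinson lam X"
    and Y: "compact Y" "Y \<noteq> {}" "Y = hutchinson lam Y"
  shows "X \<subseteq> Y"
proof
  fix x
  assume "x \<in> X"
  obtain D where "\<And>x y. x \<in> X \<Longrightarrow> y \<in> Y \<Longrightarrow> dist x y \<le> D"
    using compact_imp_bounded[OF compact_Un[OF X(1) Y(1)]] unfolding bounded_two_points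
    by (meson UnI1 UnI2)
  then have "\<exists>y\<in>Y. dist x y \<le> lam ^ n * D" for n
    using Y(2) lam X(2) Y(3) \<open>x \<in> X\<close> by (intro hutchinson_fixpoint_approx) auto
  then have "infdist x Y \<le> lam ^ n * D" for n
    using infdist_le order_trans by blast
  moreover have "(\<lambda>n. lam ^ n * D) \<longlonglongrightarrow> 0"
    using lam by (intro tendsto_mult_left_zero LIMSEQ_power_zero) auto
  ultimately have "infdist x Y \<le> 0"
    by (intro LIMSEQ_le_const) auto
  then show "x \<in> Y"
    using in_closed_iff_infdist_zero[OF compact_imp_closed[OF Y(1)] Y(2)] infdist_nonneg[of x Y]
    by simp
qed

lemma XL_hutchinson_fixpoint:
  assumes "0 < lam" "lam < 1"
  shows "compact (XL lam)" "XL lam \<noteq> {}" "XL lam = hutchinson lam (XL lam)" "XL lam \<subseteq> {0..}"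
proof -
  obtain X where X: "compact X" "X \<noteq> {}" "X = hutchinson lam X" "X \<subseteq> {0..}"
    using hutchinson_fixpoint_exists[OF assms] by blast
  have "XL lam = X"
    unfolding XL_def hutchinson_def[symmetric]
    using X hutchinson_fixpoint_subset[OF assms] by (intro the_equality) blast+
  then show "compact (XL lam)" "XL lam \<noteq> {}" "XL lam = hutchinson lam (XL lam)" "XL lam \<subseteq> {0..}"
    using X by auto
qed

lemma XL_scaling_closed:
  assumes "0 < lam" "lam < 1" "x \<in> XL lam"
  shows "lam * x \<in> XL lam" "lam * (x + 1/4) \<in> XL lam"
proof -
  have "tauL lam d x \<in> hutchinson lam (XL lam)" if "d \<in> {0, 1/4}" for d
    using assms(3) that unfolding hutchinson_def by blast
  then have "tauL lam d x \<in> XL lam" if "d \<in> {0, 1/4}" for d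
    using that XL_hutchinson_fixpoint(3)[OF assms(1,2)] by simp
  from this[of 0] this[of "1/4"] show "lam * x \<in> XL lam" "lam * (x + 1/4) \<in> XL lam"
    by (simp_all add: tauL_def)
qed

lemma zero_mem_XL:
  assumes "0 < lam" "lam < 1"
  shows "0 \<in> XL lam"
proof -
  obtain x where x: "x \<in> XL lam"
    using XL_hutchinson_fixpoint(2)[OF assms] by blast
  have "lam ^ n * x \<in> XL lam" for n
    by (induction n) (use x XL_scaling_closed(1)[OF assms] in \<open>auto simp: mult.assoc\<close>)
  moreover have "(\<lambda>n. lam ^ n * x) \<longlonglongrightarrow> 0"
    using assms by (intro tendsto_mult_left_zero LIMSEQ_power_zero) auto
  ultimately show ?thesis
    by (rule closed_sequentially[OF compact_imp_closed[OF XL_hutchinson_fixpoint(1)[OF assms]]])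
qed

section \<open>The self-similar measure\<close>

definition coin :: "real measure" where
  "coin = measure_pmf (pmf_of_set {-1, 1})"

definition self_similar :: "real \<Rightarrow> real measure \<Rightarrow> bool" where
  "self_similar lam M \<longleftrightarrow> prob_space M \<and> sets M = sets borel \<and>
     (\<forall>A\<in>sets borel.
        emeasure M A = (emeasure M ((\<lambda>x. lam * x + 1) -` A)
                       + emeasure M ((\<lambda>x. lam * x - 1) -` A)) / 2)"

lemma nu_eq_The_self_similar: "nu lam = (THE M. self_similar lam M)"
  unfolding nu_def self_similar_def ..

lemma prob_space_coin: "prob_space coin"
  unfolding coin_def by (rule prob_space_measure_pmf)

lemma borel_measurable_coin: "f \<in> borel_measurable coin"
  unfolding coin_def by simp

lemma borel_measurable_pair_coin:
  assumes "sets N = sets borel"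
  shows "(\<lambda>z. fst z + lam * snd z) \<in> borel_measurable (coin \<Otimes>\<^sub>M N)"
proof -
  have "fst \<in> borel_measurable (coin \<Otimes>\<^sub>M N)"
    by (rule measurable_compose[OF measurable_fst borel_measurable_coin])
  moreover have "snd \<in> borel_measurable (coin \<Otimes>\<^sub>M N)"
    using measurable_snd[of coin N] measurable_cong_sets[OF refl assms] by blast
  ultimately show ?thesis
    by measurable
qed

lemma nn_integral_coin: "(\<integral>\<^sup>+s. f s \<partial>coin) = (f (-1) + f 1) / 2"
  unfolding coin_def by (subst nn_integral_pmf_of_set) auto

lemma char_coin: "char coin t = cos t"
proof -
  have "char coin t = (iexp (- t) + iexp t) / 2"
    unfolding char_def coin_def
    by (subst integral_measure_pmf[of "{-1, 1}"]) (auto simp: scaleR_conv_of_real)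
  also have "\<dots> = cos t"
    using cis_conv_exp[of t] cis_conv_exp[of "- t"] by (simp add: complex_eq_iff)
  finally show ?thesis .
qed

lemma self_similar_real_distribution: "self_similar lam N \<Longrightarrow> real_distribution N"
  unfolding self_similar_def real_distribution_def real_distribution_axioms_def by auto

lemma self_similar_eq_distr_pair:
  assumes N: "self_similar lam N"
  shows "N = distr (coin \<Otimes>\<^sub>M N) borel (\<lambda>z. fst z + lam * snd z)"
proof (rule measure_eqI)
  interpret N: prob_space N
    using N unfolding self_similar_def by auto
  have sets_N [measurable_cong]: "sets N = sets borel"
    using N unfolding self_similar_def by auto
  show "sets N = sets (distr (coin \<Otimes>\<^sub>M N) borel (\<lambda>z. fst z + lam * snd z))"
    using sets_N by simp
  fix A
  assume "A \<in> sets N"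
  then have A [measurable]: "A \<in> sets borel"
    using sets_N by simp
  note borel_measurable_pair_coin[OF sets_N, measurable]
  have "emeasure (distr (coin \<Otimes>\<^sub>M N) borel (\<lambda>z. fst z + lam * snd z)) A
      = (\<integral>\<^sup>+s. emeasure N ((\<lambda>x. lam * x + s) -` A) \<partial>coin)"
    by (subst emeasure_distr, measurable, subst N.emeasure_pair_measure_alt, measurable)
      (auto intro!: nn_integral_cong arg_cong[where f = "emeasure N"]
        simp: space_pair_measure sets_eq_imp_space_eq[OF sets_N] coin_def add.commute)
  also have "\<dots> = emeasure N A"
    using N A unfolding self_similar_def by (simp add: nn_integral_coin add.commute)
  finally show "emeasure N A = emeasure (distr (coin \<Otimes>\<^sub>M N) borel (\<lambda>z. fst z + lam * snd z)) A"
    by simp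
qed

lemma char_self_similar:
  assumes N: "self_similar lam N"
  shows "char N t = complex_of_real (cos t) * char N (lam * t)"
proof -
  interpret N: prob_space N
    using N unfolding self_similar_def by auto
  have sets_N [measurable_cong]: "sets N = sets borel"
    using N unfolding self_similar_def by auto
  interpret coin: prob_space coin
    by (rule prob_space_coin)
  interpret pair_sigma_finite coin N ..
  interpret prob_space "coin \<Otimes>\<^sub>M N"
    by (rule prob_space_pair) unfold_locales
  note borel_measurable_pair_coin[OF sets_N, measurable]
  have "char N t = (CLINT z|coin \<Otimes>\<^sub>M N. iexp (t * (fst z + lam * snd z)))"
    unfolding char_def by (subst self_similar_eq_distr_pair[OF N]) (rule integral_distr, measurable)
  also have "\<dots> = (CLINT s|coin. (CLINT x|N. iexp (t * (s + lam * x))))"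
  proof -
    have "integrable (coin \<Otimes>\<^sub>M N) (\<lambda>z. iexp (t * (fst z + lam * snd z)))"
      by (rule integrable_const_bound[where B = 1]) (auto simp del: of_real_mult)
    from integral_fst'[OF this] show ?thesis
      by simp
  qed
  also have "\<dots> = (CLINT s|coin. iexp (t * s) * char N (lam * t))"
    unfolding char_def
    by (intro Bochner_Integration.integral_cong refl)
      (simp add: algebra_simps exp_add flip: integral_mult_right_zero)
  also have "\<dots> = char coin t * char N (lam * t)"
    unfolding char_def by simp
  finally show ?thesis
    by (simp add: char_coin)
qed

lemma self_similar_unique:
  assumes lam: "0 < lam" "lam < 1" and N1: "self_similar lam N1" and N2: "self_similar lam N2"
  shows "N1 = N2"
proof -
  interpret N1: real_distribution N1
    using self_similar_real_distribution[OF N1] .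
  interpret N2: real_distribution N2
    using self_similar_real_distribution[OF N2] .
  have "char N1 t - char N2 t = 0" for t
  proof (rule vanishes_if_norm_le_norm_scaled[OF lam, where S = UNIV])
    show "continuous (at 0 within UNIV) (\<lambda>t. char N1 t - char N2 t)"
      using N1.isCont_char N2.isCont_char by (intro continuous_intros) auto
    show "norm (char N1 y - char N2 y) \<le> norm (char N1 (lam * y) - char N2 (lam * y))" for y
      using char_self_similar[OF N1, of y] char_self_similar[OF N2, of y]
      by (simp add: norm_mult mult_left_le_one_le flip: right_diff_distrib)
  qed (auto simp: N1.char_zero N2.char_zero)
  then show ?thesis
    using Levy_uniqueness[OF N1.real_distribution_axioms N2.real_distribution_axioms] by auto
qed

text \<open>The sign makes the series converge for every real stream, not only for sign sequences.\<close>

definition random_series :: "real \<Rightarrow> real stream \<Rightarrow> real" where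
  "random_series lam \<omega> = (\<Sum>k. sgn (\<omega> !! k) * lam ^ k)"

lemma summable_random_series:
  fixes lam :: real
  assumes "0 < lam" "lam < 1"
  shows "summable (\<lambda>k. sgn (\<omega> !! k) * lam ^ k)"
  using assms by (intro summable_comparison_test'[OF summable_geometric[of lam]])
    (auto simp: abs_mult abs_sgn_eq)

lemma random_series_SCons:
  assumes "0 < lam" "lam < 1"
  shows "random_series lam (s ## \<omega>) = sgn s + lam * random_series lam \<omega>"
  using suminf_split_head[OF summable_random_series[OF assms, of "s ## \<omega>"]]
    suminf_mult[OF summable_random_series[OF assms, of \<omega>], of lam]
  unfolding random_series_def by (simp add: mult_ac)

lemma borel_measurable_random_series:
  assumes "0 < lam" "lam < 1"
  shows "random_series lam \<in> borel_measurable (stream_space coin)"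
proof (rule borel_measurable_LIMSEQ_real)
  show "(\<lambda>n. \<Sum>k<n. sgn (\<omega> !! k) * lam ^ k) \<longlonglongrightarrow> random_series lam \<omega>" for \<omega>
    unfolding random_series_def by (rule summable_LIMSEQ[OF summable_random_series[OF assms]])
  have "(\<lambda>\<omega>. \<omega> !! k) \<in> borel_measurable (stream_space coin)" for k
    by (rule measurable_compose[OF measurable_snth borel_measurable_coin])
  then show "(\<lambda>\<omega>. \<Sum>k<n. sgn (\<omega> !! k) * lam ^ k) \<in> borel_measurable (stream_space coin)" for n
    by measurable
qed

lemma self_similar_distr_random_series:
  assumes lam: "0 < lam" "lam < 1"
  shows "self_similar lam (distr (stream_space coin) borel (random_series lam))"
proof -
  interpret coin: prob_space coin
    by (rule prob_space_coin)
  interpret S: prob_space "stream_space coin"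
    by (rule coin.prob_space_stream_space)
  let ?N = "distr (stream_space coin) borel (random_series lam)"
  note [measurable] = borel_measurable_random_series[OF lam]
  have "emeasure ?N A
      = (emeasure ?N ((\<lambda>x. lam * x + 1) -` A) + emeasure ?N ((\<lambda>x. lam * x - 1) -` A)) / 2"
    if [measurable]: "A \<in> sets borel" for A
  proof -
    have emeasure_N: "emeasure ?N B = (\<integral>\<^sup>+\<omega>. indicator B (random_series lam \<omega>) \<partial>stream_space coin)"
      if "B \<in> sets borel" for B
      using that by (simp add: nn_integral_distr flip: nn_integral_indicator)
    have [measurable]: "(\<lambda>x. lam * x + c) -` A \<in> sets borel" for c
      using measurable_sets[of "\<lambda>x. lam * x + c" borel borel A] by simp
    have "emeasure ?N A = (\<integral>\<^sup>+\<omega>. indicator A (random_series lam \<omega>) \<partial>stream_space coin)"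
      by (rule emeasure_N) measurable
    also have "\<dots> = (\<integral>\<^sup>+s. (\<integral>\<^sup>+\<omega>. indicator A (random_series lam (s ## \<omega>))
        \<partial>stream_space coin) \<partial>coin)"
      by (rule coin.nn_integral_stream_space) measurable
    also have "\<dots> = (\<integral>\<^sup>+s. emeasure ?N ((\<lambda>x. lam * x + sgn s) -` A) \<partial>coin)"
    proof (rule nn_integral_cong)
      fix s
      have "emeasure ?N ((\<lambda>x. lam * x + sgn s) -` A)
          = (\<integral>\<^sup>+\<omega>. indicator ((\<lambda>x. lam * x + sgn s) -` A) (random_series lam \<omega>) \<partial>stream_space coin)"
        by (rule emeasure_N) measurable
      then show "(\<integral>\<^sup>+\<omega>. indicator A (random_series lam (s ## \<omega>)) \<partial>stream_space coin)
          = emeasure ?N ((\<lambda>x. lam * x + sgn s) -` A)"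
        by (simp add: random_series_SCons[OF lam] indicator_def add.commute)
    qed
    finally show ?thesis
      by (simp add: nn_integral_coin add.commute)
  qed
  then show ?thesis
    unfolding self_similar_def by (auto intro: S.prob_space_distr)
qed

lemma nu_self_similar:
  assumes "0 < lam" "lam < 1"
  shows "self_similar lam (nu lam)"
proof -
  have "\<exists>!M. self_similar lam M"
    using self_similar_distr_random_series[OF assms] self_similar_unique[OF assms] by blast
  then show ?thesis
    unfolding nu_eq_The_self_similar by (rule theI')
qed

lemma nu_hat_eq_char: "nu_hat lam t = char (nu lam) (2 * pi * t)"
  unfolding nu_hat_def char_def
  by (intro Bochner_Integration.integral_cong refl) (simp add: cis_conv_exp mult_ac)

lemma power_spectrum_nu:
  assumes "0 < lam" "lam < 1"
  defines "g \<equiv> \<lambda>x. (cmod (nu_hat lam x))^2"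
  shows "continuous_on UNIV g" "g 0 = 1" "\<And>x. g x \<le> 1"
    "\<And>x. g x = (cos (2 * pi * x))^2 * g (lam * x)"
proof -
  note N = nu_self_similar[OF assms(1,2)]
  interpret real_distribution "nu lam"
    using self_similar_real_distribution[OF N] .
  show "continuous_on UNIV g"
    unfolding g_def nu_hat_eq_char
    by (intro continuous_intros continuous_at_imp_continuous_on ballI
        continuous_at_compose[unfolded o_def, OF _ isCont_char])
  show "g 0 = 1"
    unfolding g_def nu_hat_eq_char by (simp add: char_zero)
  show "g x \<le> 1" for x
    unfolding g_def nu_hat_eq_char using cmod_char_le_1 by (simp add: power_le_one)
  show "g x = (cos (2 * pi * x))^2 * g (lam * x)" for x
    using char_self_similar[OF N, of "2 * pi * x"]
    unfolding g_def nu_hat_eq_char by (simp add: norm_mult power_mult_distrib mult_ac)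
qed

section \<open>Partial sums over words\<close>

lemma tau_word_Cons: "tau_word lam (d # w) x = tau_word lam w (tauL lam d x)"
  unfolding tau_word_def by simp

lemma W_word_Cons: "W_word lam (d # w) x = Wf lam (tauL lam d x) * W_word lam w (tauL lam d x)"
proof -
  have "W_word lam (d # w) x
      = Wf lam (tau_word lam [d] x)
        * (\<Prod>k\<in>{Suc 1..Suc (length w)}. Wf lam (tau_word lam (take k (d # w)) x))"
    unfolding W_word_def by (subst prod.atLeast_Suc_atMost) auto
  also have "(\<Prod>k\<in>{Suc 1..Suc (length w)}. Wf lam (tau_word lam (take k (d # w)) x))
      = W_word lam w (tauL lam d x)"
    unfolding W_word_def prod.shift_bounds_cl_Suc_ivl by (simp add: tau_word_Cons)
  finally show ?thesis
    by (simp add: tau_word_def)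
qed

lemma Wf_tauL_0: "lam \<noteq> 0 \<Longrightarrow> Wf lam (tauL lam 0 x) = (cos (2 * pi * x))^2"
  unfolding Wf_def tauL_def by (simp add: mult.assoc)

lemma Wf_tauL_quarter: "lam \<noteq> 0 \<Longrightarrow> Wf lam (tauL lam (1/4) x) = (sin (2 * pi * x))^2"
proof -
  assume "lam \<noteq> 0"
  then have "2 * pi * (lam * (x + 1/4)) / lam = 2 * pi * x + pi / 2"
    by (simp add: field_simps)
  then show ?thesis
    unfolding Wf_def tauL_def by (simp add: cos_add)
qed

definition words_upto :: "nat \<Rightarrow> real list set" where
  "words_upto n = {w \<in> W0. length w \<le> n}"

lemma finite_words_upto: "finite (words_upto n)"
proof (rule finite_subset)
  show "words_upto n \<subseteq> {w. set w \<subseteq> {0, 1/4} \<and> length w \<le> n}"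
    unfolding words_upto_def W0_def by auto
qed (simp add: finite_lists_length_le)

lemma words_upto_0: "words_upto 0 = {[]}"
  unfolding words_upto_def W0_def by auto

lemma words_upto_Suc:
  "words_upto (Suc n) = insert [] (Cons 0 ` (words_upto n - {[]}) \<union> Cons (1/4) ` words_upto n)"
proof (intro equalityI subsetI)
  fix w
  assume w: "w \<in> words_upto (Suc n)"
  show "w \<in> insert [] (Cons 0 ` (words_upto n - {[]}) \<union> Cons (1/4) ` words_upto n)"
  proof (cases w)
    case (Cons d v)
    then have "d \<in> {0, 1/4}" "v = [] \<and> d = 1/4 \<or> v \<noteq> [] \<and> v \<in> words_upto n"
      using w unfolding words_upto_def W0_def by auto
    moreover have "[] \<in> words_upto n"
      unfolding words_upto_def W0_def by simp
    ultimately show ?thesis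
      using Cons by auto
  qed simp
qed (auto simp: words_upto_def W0_def split: if_splits)

lemma partial_sum_words_upto:
  "partial_sum lam f n x = (\<Sum>w\<in>words_upto n. W_word lam w x * f (tau_word lam w x))"
  unfolding partial_sum_def words_upto_def ..

lemma partial_sum_0: "partial_sum lam f 0 x = f x"
  by (simp add: partial_sum_words_upto words_upto_0 W_word_def tau_word_def)

lemma partial_sum_Suc:
  assumes "lam \<noteq> 0"
  shows "partial_sum lam f (Suc n) x = f x
     + (cos (2 * pi * x))^2 * (partial_sum lam f n (lam * x) - f (lam * x))
     + (sin (2 * pi * x))^2 * partial_sum lam f n (lam * (x + 1/4))"
proof -
  let ?t = "\<lambda>x w. W_word lam w x * f (tau_word lam w x)"
  have Cons: "?t x (d # w) = Wf lam (tauL lam d x) * ?t (tauL lam d x) w" for d w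
    by (simp add: W_word_Cons tau_word_Cons)
  have fin: "finite (words_upto n)"
    by (rule finite_words_upto)
  have "partial_sum lam f (Suc n) x
      = ?t x [] + ((\<Sum>w\<in>Cons 0 ` (words_upto n - {[]}). ?t x w)
        + (\<Sum>w\<in>Cons (1/4) ` words_upto n. ?t x w))"
    unfolding partial_sum_words_upto words_upto_Suc using fin
    by (subst sum.insert) (auto intro: sum.union_disjoint)
  also have "\<dots> = ?t x [] + (\<Sum>w\<in>words_upto n - {[]}. ?t x (0 # w))
      + (\<Sum>w\<in>words_upto n. ?t x (1/4 # w))"
    by (simp add: sum.reindex)
  also have "(\<Sum>w\<in>words_upto n - {[]}. ?t x (0 # w))
      = Wf lam (tauL lam 0 x) * (partial_sum lam f n (tauL lam 0 x) - ?t (tauL lam 0 x) [])"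
    unfolding Cons partial_sum_words_upto sum_distrib_left[symmetric] using finite_words_upto[of n]
    by (simp add: sum_diff1 words_upto_def W0_def)
  also have "(\<Sum>w\<in>words_upto n. ?t x (1/4 # w))
      = Wf lam (tauL lam (1/4) x) * partial_sum lam f n (tauL lam (1/4) x)"
    unfolding Cons partial_sum_words_upto sum_distrib_left ..
  finally show ?thesis
    using assms
    by (simp add: Wf_tauL_0 Wf_tauL_quarter W_word_def tau_word_def) (simp add: tauL_def)
qed

lemma partial_sum_mono:
  assumes "\<And>y. 0 \<le> f y"
  shows "partial_sum lam f n x \<le> partial_sum lam f (Suc n) x"
  unfolding partial_sum_words_upto
proof (rule sum_mono2[OF finite_words_upto])
  show "words_upto n \<subseteq> words_upto (Suc n)"
    unfolding words_upto_def by auto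
  show "0 \<le> W_word lam w x * f (tau_word lam w x)" for w
    unfolding W_word_def Wf_def using assms by (intro mult_nonneg_nonneg prod_nonneg) auto
qed

lemma partial_sum_at_zero:
  assumes "lam \<noteq> 0"
  shows "partial_sum lam f n 0 = f 0"
  by (induction n) (simp_all add: partial_sum_0 partial_sum_Suc[OF assms])

lemma partial_sum_Suc_scaling_invariant:
  assumes "lam \<noteq> 0" and g: "\<And>x. g x = (cos (2 * pi * x))^2 * g (lam * x)"
  shows "partial_sum lam g (Suc n) x = (cos (2 * pi * x))^2 * partial_sum lam g n (lam * x)
     + (sin (2 * pi * x))^2 * partial_sum lam g n (lam * (x + 1/4))"
  using g[of x] unfolding partial_sum_Suc[OF assms(1)] by (simp add: algebra_simps)

lemma continuous_on_partial_sum: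
  assumes "lam \<noteq> 0" "continuous_on UNIV f"
  shows "continuous_on UNIV (partial_sum lam f n)"
proof (induction n)
  case 0
  then show ?case
    using assms(2) by (simp add: partial_sum_0)
next
  case (Suc n)
  have "continuous_on UNIV (\<lambda>x. f x
      + (cos (2 * pi * x))^2 * (partial_sum lam f n (lam * x) - f (lam * x))
      + (sin (2 * pi * x))^2 * partial_sum lam f n (lam * (x + 1/4)))"
    by (intro continuous_intros continuous_on_compose2[OF Suc] continuous_on_compose2[OF assms(2)])
      auto
  then show ?case
    unfolding partial_sum_Suc[OF assms(1)] .
qed

section \<open>A minimum principle for the averaging identity\<close>

lemma cos_sin_nonzero_after_cos_zero:
  assumes "cos x = 0" "0 < t" "t < pi / 2"
  shows "cos (x + t) \<noteq> 0" "sin (x + t) \<noteq> 0"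
proof -
  have "sin x \<noteq> 0"
    using assms(1) sin_cos_squared_add[of x] by auto
  moreover have "sin t > 0" "cos t > 0"
    using assms(2,3) by (auto intro: sin_gt_zero cos_gt_zero)
  ultimately show "cos (x + t) \<noteq> 0" "sin (x + t) \<noteq> 0"
    using assms(1) by (simp_all add: cos_add sin_add)
qed

lemma scaling_ne_at_cos_zero:
  assumes lam: "\<forall>n::nat. n \<ge> 1 \<longrightarrow> lam \<noteq> 1 - 1 / (2 * real n)"
    and "cos (2 * pi * y) = 0" "0 < y"
  shows "lam * (y + 1/4) \<noteq> y"
proof
  assume eq: "lam * (y + 1/4) = y"
  obtain i :: int where "odd i" "2 * pi * y = of_int i * (pi / 2)"
    using assms(2) cos_zero_iff_int by blast
  then obtain k :: int where k: "4 * y = 2 * of_int k + 1"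
    by (auto elim!: oddE simp: field_simps)
  with \<open>0 < y\<close> have "k \<ge> 0"
    by linarith
  have "lam = 1 - 1 / (2 * real (Suc (nat k)))"
    using eq k \<open>k \<ge> 0\<close> by (simp add: field_simps)
  then show False
    using lam by auto
qed

lemma power_scaling_eqs_impossible:
  fixes lam y c :: real
  assumes lam: "0 < lam" "lam < 1" and "0 < y" "0 < c" "0 < a"
    and eq1: "lam ^ a * (y + c) = y" and eq2: "lam ^ p * (y + lam * c) = y"
  shows False
proof (cases "a \<le> p")
  case True
  then have "lam ^ p * (y + lam * c) \<le> lam ^ a * (y + lam * c)"
    using assms by (intro mult_right_mono power_decreasing) auto
  also have "\<dots> < lam ^ a * (y + c)"
    using lam \<open>0 < c\<close> by (intro mult_strict_left_mono) auto
  finally show False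
    using eq1 eq2 by simp
next
  case False
  then have "lam ^ (a - 1) \<le> lam ^ p"
    using lam by (intro power_decreasing) auto
  have lam_a: "lam ^ a = lam * lam ^ (a - 1)"
    using \<open>0 < a\<close> by (simp flip: power_Suc)
  have "y = lam * lam ^ (a - 1) * y + lam * lam ^ (a - 1) * c"
    using eq1 lam_a by (simp add: algebra_simps)
  also have "\<dots> < lam ^ (a - 1) * y + lam * lam ^ (a - 1) * c"
    using assms by simp
  also have "\<dots> = lam ^ (a - 1) * (y + lam * c)"
    by (simp add: algebra_simps)
  also have "\<dots> \<le> lam ^ p * (y + lam * c)"
    using \<open>lam ^ (a - 1) \<le> lam ^ p\<close> assms by (intro mult_right_mono) auto
  finally show False
    using eq2 by simp
qed

lemma descent_to_minimum:
  fixes lam ym c :: real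
  assumes lam: "0 < lam" "lam < 1" and "0 < ym" and min: "\<And>y. y \<in> M \<Longrightarrow> ym \<le> y"
    and step: "\<And>z. z \<in> M \<Longrightarrow> ym < z \<Longrightarrow> z < ym + c \<Longrightarrow> lam * z \<in> M"
    and z: "z \<in> M" "ym < z" "z < ym + c"
  shows "\<exists>j. lam ^ j * z \<in> M \<and> lam ^ Suc j * z = ym"
proof -
  have "(\<lambda>n. lam ^ n * z) \<longlonglongrightarrow> 0"
    using lam by (intro tendsto_mult_left_zero LIMSEQ_power_zero) auto
  from order_tendstoD(2)[OF this \<open>0 < ym\<close>] obtain n where "lam ^ n * z < ym"
    by (auto simp: eventually_sequentially)
  with z show ?thesis
  proof (induction n arbitrary: z)
    case (Suc n)
    have "lam * z \<in> M"
      using step Suc.prems(1-3) by blast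
    show ?case
    proof (cases "lam * z = ym")
      case True
      then show ?thesis
        using Suc.prems(1) by (intro exI[of _ 0]) simp
    next
      case False
      then have "ym < lam * z" "lam * z < ym + c"
        using min[OF \<open>lam * z \<in> M\<close>] Suc.prems(2,3) lam \<open>0 < ym\<close>
        by (auto intro: le_less_trans[OF mult_left_le_one_le])
      moreover have "lam ^ n * (lam * z) < ym"
        using Suc.prems(4) by (simp add: mult.assoc mult.left_commute)
      ultimately obtain j where "lam ^ j * (lam * z) \<in> M" "lam ^ Suc j * (lam * z) = ym"
        using Suc.IH \<open>lam * z \<in> M\<close> by blast
      then show ?thesis
        by (intro exI[of _ "Suc j"]) (simp add: mult_ac)
    qed
  qed simp
qed

lemma positive_minimum_impossible:
  fixes lam ym :: real
  assumes lam: "0 < lam" "lam < 1" and "0 < ym" and min: "\<And>y. y \<in> M \<Longrightarrow> ym \<le> y"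
    and branches: "\<And>z. z \<in> M \<Longrightarrow> ym < z \<Longrightarrow> z < ym + 1/4 \<Longrightarrow> lam * z \<in> M \<and> lam * (z + 1/4) \<in> M"
    and start: "lam * (ym + 1/4) \<in> M" "lam * (ym + 1/4) \<noteq> ym"
  shows False
proof -
  have descent: "\<exists>j. lam ^ j * z \<in> M \<and> lam ^ Suc j * z = ym"
    if "z \<in> M" "ym < z" "z < ym + 1/4" for z
    using descent_to_minimum[of lam ym M "1/4" z] lam \<open>0 < ym\<close> min branches that by blast
  have "ym < lam * (ym + 1/4)" "lam * (ym + 1/4) < ym + 1/4"
    using min[OF start(1)] start(2) lam \<open>0 < ym\<close> by auto
  then obtain j where j: "lam ^ j * (lam * (ym + 1/4)) \<in> M" "lam ^ Suc j * (lam * (ym + 1/4)) = ym"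
    using descent start(1) by blast
  \<comment> \<open>the last point \<open>a\<close> of this orbit before it reaches \<open>ym\<close> lies in \<open>(ym, ym + 1/4)\<close>, and the
    second branch sends it to \<open>ym + lam/4\<close>\<close>
  define a where "a = lam ^ j * (lam * (ym + 1/4))"
  have "lam * a = ym"
    using j(2) unfolding a_def by (simp add: mult_ac)
  moreover have "0 < a"
    unfolding a_def using lam \<open>0 < ym\<close> by simp
  then have "lam * a < a"
    using lam by simp
  with \<open>lam * a = ym\<close> have "ym < a"
    by simp
  have "a \<le> lam * (ym + 1/4)"
    unfolding a_def using lam \<open>0 < ym\<close> by (intro mult_left_le_one_le) (auto intro: power_le_one)
  then have "lam * (a + 1/4) \<in> M"
    using branches j(1) \<open>ym < a\<close> \<open>lam * (ym + 1/4) < ym + 1/4\<close> unfolding a_def by simp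
  moreover have "lam * (a + 1/4) = ym + lam * (1/4)"
    using \<open>lam * a = ym\<close> by (simp add: algebra_simps)
  ultimately have "ym + lam * (1/4) \<in> M"
    by simp
  moreover have "ym < ym + lam * (1/4)" "ym + lam * (1/4) < ym + 1/4"
    using lam by auto
  ultimately obtain p where "lam ^ Suc p * (ym + lam * (1/4)) = ym"
    using descent by blast
  moreover have "lam ^ Suc (Suc j) * (ym + 1/4) = ym"
    using j(2) by (simp add: mult_ac)
  ultimately show False
    using power_scaling_eqs_impossible[OF lam \<open>0 < ym\<close>, of "1/4" "Suc (Suc j)" "Suc p"] by simp
qed

lemma zero_mem_if_invariant:
  fixes lam :: real
  assumes lam: "0 < lam" "lam < 1" "\<forall>n::nat. n \<ge> 1 \<longrightarrow> lam \<noteq> 1 - 1 / (2 * real n)"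
    and M: "compact M" "M \<noteq> {}" "M \<subseteq> {0..}"
    and cos_step: "\<And>y. y \<in> M \<Longrightarrow> cos (2 * pi * y) \<noteq> 0 \<Longrightarrow> lam * y \<in> M"
    and sin_step: "\<And>y. y \<in> M \<Longrightarrow> sin (2 * pi * y) \<noteq> 0 \<Longrightarrow> lam * (y + 1/4) \<in> M"
  shows "0 \<in> M"
proof (rule ccontr)
  assume "0 \<notin> M"
  obtain ym where ym: "ym \<in> M" "\<And>y. y \<in> M \<Longrightarrow> ym \<le> y"
    using compact_attains_inf[OF M(1,2)] by blast
  have "0 \<le> ym" "ym \<noteq> 0"
    using ym(1) M(3) \<open>0 \<notin> M\<close> by auto
  then have "0 < ym"
    by simp
  have cos_ym: "cos (2 * pi * ym) = 0"
  proof (rule ccontr)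
    assume "cos (2 * pi * ym) \<noteq> 0"
    then have "ym \<le> lam * ym"
      using ym cos_step by blast
    then show False
      using lam \<open>0 < ym\<close> by simp
  qed
  show False
  proof (rule positive_minimum_impossible[OF lam(1,2) \<open>0 < ym\<close> ym(2)])
    show "lam * z \<in> M \<and> lam * (z + 1/4) \<in> M" if "z \<in> M" "ym < z" "z < ym + 1/4" for z
    proof -
      have "0 < 2 * pi * (z - ym)" "2 * pi * (z - ym) < pi / 2"
        using that by auto
      from cos_sin_nonzero_after_cos_zero[OF cos_ym this]
      have "cos (2 * pi * z) \<noteq> 0" "sin (2 * pi * z) \<noteq> 0"
        by (simp_all add: algebra_simps)
      then show ?thesis
        using cos_step sin_step that(1) by blast
    qed
    have "sin (2 * pi * ym) \<noteq> 0"
      using cos_ym sin_cos_squared_add[of "2 * pi * ym"] by auto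
    then show "lam * (ym + 1/4) \<in> M"
      by (rule sin_step[OF ym(1)])
    show "lam * (ym + 1/4) \<noteq> ym"
      by (rule scaling_ne_at_cos_zero[OF lam(3) cos_ym \<open>0 < ym\<close>])
  qed
qed

lemma averaging_eq_one:
  fixes lam :: real and h :: "real \<Rightarrow> real"
  assumes lam: "0 < lam" "lam < 1" "\<forall>n::nat. n \<ge> 1 \<longrightarrow> lam \<noteq> 1 - 1 / (2 * real n)"
    and X: "compact X" "0 \<in> X" "X \<subseteq> {0..}"
      "\<And>x. x \<in> X \<Longrightarrow> lam * x \<in> X" "\<And>x. x \<in> X \<Longrightarrow> lam * (x + 1/4) \<in> X"
    and h: "\<And>t. closed {x. h x \<le> t}" "\<And>x. x \<in> X \<Longrightarrow> h x \<le> 1" "1 \<le> h 0"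
      "\<And>x. x \<in> X \<Longrightarrow>
        h x = (cos (2 * pi * x))^2 * h (lam * x) + (sin (2 * pi * x))^2 * h (lam * (x + 1/4))"
    and "x \<in> X"
  shows "h x = 1"
proof -
  obtain x0 where x0: "x0 \<in> X" "\<And>y. y \<in> X \<Longrightarrow> h x0 \<le> h y"
    using compact_attains_inf_closed_sublevel[OF X(1) _ h(1)] X(2) by blast
  define M where "M = X \<inter> {y. h y \<le> h x0}"
  have below: "((cos (2 * pi * y))^2 \<noteq> 0 \<longrightarrow> h (lam * y) \<le> h x0)
      \<and> ((sin (2 * pi * y))^2 \<noteq> 0 \<longrightarrow> h (lam * (y + 1/4)) \<le> h x0)"
    if "y \<in> M" for y
  proof -
    have "y \<in> X" "h y \<le> h x0"
      using that unfolding M_def by auto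
    have "h x0 \<le> h (lam * y)" "h x0 \<le> h (lam * (y + 1/4))"
      using x0(2) X(4,5) \<open>y \<in> X\<close> by auto
    moreover have
      "(cos (2 * pi * y))^2 * h (lam * y) + (sin (2 * pi * y))^2 * h (lam * (y + 1/4)) \<le> h x0"
      using h(4)[OF \<open>y \<in> X\<close>] \<open>h y \<le> h x0\<close> by simp
    ultimately show ?thesis
      using convex_combination_le_lower_bound[OF zero_le_power2 zero_le_power2 sin_cos_squared_add2]
      by blast
  qed
  have "0 \<in> M"
  proof (rule zero_mem_if_invariant[OF lam])
    show "compact M"
      unfolding M_def by (rule compact_Int_closed[OF X(1) h(1)])
    show "M \<noteq> {}" "M \<subseteq> {0..}"
      using x0(1) X(3) unfolding M_def by auto
    show "lam * y \<in> M" if "y \<in> M" "cos (2 * pi * y) \<noteq> 0" for y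
      using below[OF that(1)] that X(4) unfolding M_def by simp
    show "lam * (y + 1/4) \<in> M" if "y \<in> M" "sin (2 * pi * y) \<noteq> 0" for y
      using below[OF that(1)] that X(5) unfolding M_def by simp
  qed
  then show ?thesis
    using x0(2)[OF \<open>x \<in> X\<close>] h(2)[OF \<open>x \<in> X\<close>] h(3) unfolding M_def by auto
qed

section \<open>The functional equation\<close>

lemma partial_sum_limit_scaling:
  assumes "lam \<noteq> 0"
    and "(\<lambda>n. partial_sum lam f n x) \<longlonglongrightarrow> 1"
    and "(\<lambda>n. partial_sum lam f n (lam * x)) \<longlonglongrightarrow> 1"
    and "(\<lambda>n. partial_sum lam f n (lam * (x + 1/4))) \<longlonglongrightarrow> 1"
  shows "f x = (cos (2 * pi * x))^2 * f (lam * x)"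
proof -
  have "(\<lambda>n. partial_sum lam f (Suc n) x) \<longlonglongrightarrow> 1"
    using assms(2) by (rule LIMSEQ_Suc)
  moreover have "(\<lambda>n. partial_sum lam f (Suc n) x) \<longlonglongrightarrow>
      f x + (cos (2 * pi * x))^2 * (1 - f (lam * x)) + (sin (2 * pi * x))^2 * 1"
    unfolding partial_sum_Suc[OF assms(1)] by (intro tendsto_intros assms(3,4))
  ultimately have "1 = f x + (cos (2 * pi * x))^2 * (1 - f (lam * x)) + (sin (2 * pi * x))^2"
    using LIMSEQ_unique by fastforce
  then show ?thesis
    using sin_cos_squared_add2[of "2 * pi * x"] by (simp add: algebra_simps)
qed

lemma eq_if_partial_sum_tendsto_one:
  assumes lam: "0 < lam" "lam < 1"
    and f: "continuous_on (XL lam) f" "\<forall>x\<in>XL lam. (\<lambda>n. partial_sum lam f n x) \<longlonglongrightarrow> 1"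
    and g: "continuous_on (XL lam) g" "g 0 = 1" "\<And>x. g x = (cos (2 * pi * x))^2 * g (lam * x)"
    and "x \<in> XL lam"
  shows "f x = g x"
proof -
  note closed = XL_scaling_closed[OF lam]
  have "(\<lambda>n. partial_sum lam f n 0) \<longlonglongrightarrow> 1"
    using f(2) zero_mem_XL[OF lam] by blast
  then have "f 0 = 1"
    using partial_sum_at_zero[of lam f] lam by (simp add: LIMSEQ_const_iff)
  have "f x - g x = 0"
  proof (rule vanishes_if_norm_le_norm_scaled[OF lam \<open>x \<in> XL lam\<close> closed(1)])
    show "continuous (at 0 within XL lam) (\<lambda>x. f x - g x)"
      using f(1) g(1) zero_mem_XL[OF lam]
      by (intro continuous_intros) (auto simp: continuous_on_eq_continuous_within)
    show "norm (f y - g y) \<le> norm (f (lam * y) - g (lam * y))" if "y \<in> XL lam" for y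
    proof -
      have "f y = (cos (2 * pi * y))^2 * f (lam * y)"
        using partial_sum_limit_scaling[of lam] lam f(2) that closed by simp
      then have "norm (f y - g y) = (cos (2 * pi * y))^2 * norm (f (lam * y) - g (lam * y))"
        using g(3)[of y] by (simp add: abs_mult flip: right_diff_distrib)
      also have "\<dots> \<le> norm (f (lam * y) - g (lam * y))"
        by (intro mult_left_le_one_le) (auto simp: abs_square_le_1)
      finally show ?thesis .
    qed
    show "f 0 - g 0 = 0"
      using \<open>f 0 = 1\<close> g(2) by simp
  qed
  then show ?thesis
    by simp
qed

lemma partial_sum_scaling_invariant_bounds:
  assumes "lam \<noteq> 0" and g: "\<And>x. 0 \<le> g x" "\<And>x. g x \<le> 1"
    "\<And>x. g x = (cos (2 * pi * x))^2 * g (lam * x)"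
  shows "0 \<le> partial_sum lam g n x \<and> partial_sum lam g n x \<le> 1"
proof (induction n arbitrary: x)
  case 0
  then show ?case
    using g(1,2) by (simp add: partial_sum_0)
next
  case (Suc n)
  then show ?case
    using partial_sum_Suc_scaling_invariant[of lam g, OF assms(1) g(3)]
      convex_bound_le[of _ 1 _ "(cos (2 * pi * x))^2" "(sin (2 * pi * x))^2"]
    by simp
qed

lemma partial_sum_tendsto_one:
  assumes lam: "0 < lam" "lam < 1" "\<forall>n::nat. n \<ge> 1 \<longrightarrow> lam \<noteq> 1 - 1 / (2 * real n)"
    and g: "continuous_on UNIV g" "g 0 = 1" "\<And>x. 0 \<le> g x" "\<And>x. g x \<le> 1"
      "\<And>x. g x = (cos (2 * pi * x))^2 * g (lam * x)"
    and "x \<in> XL lam"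
  shows "(\<lambda>n. partial_sum lam g n x) \<longlonglongrightarrow> 1"
proof -
  let ?P = "partial_sum lam g"
  have "lam \<noteq> 0"
    using lam by simp
  note bounds = partial_sum_scaling_invariant_bounds[OF \<open>lam \<noteq> 0\<close> g(3-5)]
  have bdd: "bdd_above (range (\<lambda>n. ?P n y))" for y
    using bounds by (intro bdd_aboveI[of _ 1]) auto
  have "incseq (\<lambda>n. ?P n y)" for y
    using partial_sum_mono[of g] g(3) by (intro incseq_SucI) auto
  then have lim: "(\<lambda>n. ?P n y) \<longlonglongrightarrow> (SUP n. ?P n y)" for y
    using bdd by (intro LIMSEQ_incseq_SUP)
  have "(SUP n. ?P n x) = 1"
  proof (rule averaging_eq_one[OF lam XL_hutchinson_fixpoint(1)[OF lam(1,2)]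
        zero_mem_XL[OF lam(1,2)] XL_hutchinson_fixpoint(4)[OF lam(1,2)]
        XL_scaling_closed(1)[OF lam(1,2)] XL_scaling_closed(2)[OF lam(1,2)] _ _ _ _ \<open>x \<in> XL lam\<close>])
    show "closed {y. (SUP n. ?P n y) \<le> t}" for t
      by (rule closed_sublevel_SUP[OF continuous_on_partial_sum[OF \<open>lam \<noteq> 0\<close> g(1)] bdd])
    show "(SUP n. ?P n y) \<le> 1" for y
      using bounds by (intro cSUP_least) auto
    show "1 \<le> (SUP n. ?P n 0)"
      using cSUP_upper[of 0 UNIV "\<lambda>n. ?P n 0"] bdd[of 0] g(2) by (simp add: partial_sum_0)
    show "(SUP n. ?P n y) = (cos (2 * pi * y))^2 * (SUP n. ?P n (lam * y))
        + (sin (2 * pi * y))^2 * (SUP n. ?P n (lam * (y + 1/4)))" for y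
    proof (rule LIMSEQ_unique[OF LIMSEQ_Suc[OF lim]])
      show "(\<lambda>n. ?P (Suc n) y) \<longlonglongrightarrow> (cos (2 * pi * y))^2 * (SUP n. ?P n (lam * y))
          + (sin (2 * pi * y))^2 * (SUP n. ?P n (lam * (y + 1/4)))"
        unfolding partial_sum_Suc_scaling_invariant[of lam g, OF \<open>lam \<noteq> 0\<close> g(5)]
        by (intro tendsto_intros lim)
    qed
  qed
  then show ?thesis
    using lim[of x] by simp
qed

theorem theorem4p10:
  fixes lam :: real
  assumes "0 < lam" "lam < 1"
    and "\<forall>n::nat. n \<ge> 1 \<longrightarrow> lam \<noteq> 1 - 1 / (2 * real n)"
  defines "g \<equiv> (\<lambda>x. (cmod (nu_hat lam x))^2)"
  shows "continuous_on (XL lam) g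
    \<and> (\<forall>x\<in>XL lam. (\<lambda>n. partial_sum lam g n x) \<longlonglongrightarrow> 1)
    \<and> (\<forall>f :: real \<Rightarrow> real. continuous_on (XL lam) f
          \<and> (\<forall>x\<in>XL lam. (\<lambda>n. partial_sum lam f n x) \<longlonglongrightarrow> 1)
          \<longrightarrow> (\<forall>x\<in>XL lam. f x = g x))"
proof -
  have lam: "0 < lam" "lam < 1"
    using assms(1,2) .
  have spectrum: "continuous_on UNIV g" "g 0 = 1" "\<And>x. g x \<le> 1"
    "\<And>x. g x = (cos (2 * pi * x))^2 * g (lam * x)"
    unfolding g_def by (fact power_spectrum_nu[OF lam])+
  have g_cont: "continuous_on (XL lam) g"
    using spectrum(1) by (rule continuous_on_subset) simp
  have "0 \<le> g x" for x
    unfolding g_def by simp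
  then have "\<forall>x\<in>XL lam. (\<lambda>n. partial_sum lam g n x) \<longlonglongrightarrow> 1"
    using partial_sum_tendsto_one[OF assms(1-3) spectrum(1,2) _ spectrum(3,4)] by blast
  moreover have "\<forall>x\<in>XL lam. f x = g x"
    if "continuous_on (XL lam) f" "\<forall>x\<in>XL lam. (\<lambda>n. partial_sum lam f n x) \<longlonglongrightarrow> 1" for f
    using eq_if_partial_sum_tendsto_one[OF lam that g_cont spectrum(2,4)] by blast
  ultimately show ?thesis
    using g_cont by blast
qed

end
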